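(* Let $r\geq 1$ be an integer and $N\geq 1$. Then $$ \sum_{a\leq N^r}(\tau_r'(a))^2\leq\left(\sum_{a\leq N}\tau_r(a)\right)^r. $$
   Context: $a$ runs over positive integers. $\tau_r(a)$ is the number of ways to write $a$ as an ordered product of $r$ positive integers, and $\tau_r'(a)$ is the number of ways to write $a$ as an ordered product of $r$ positive integers each of which does not exceed $N$. *)

theory Defs
  imports "HOL-Analysis.Analysis" "HOL-Library.FuncSet"
begin

definition tau :: "nat \<Rightarrow> nat \<Rightarrow> nat" where
  "tau r a = card {f \<in> {..<r} \<rightarrow>\<^sub>E {1..a}. (\<Prod>i<r. f i) = a}"

definition tau' :: "nat \<Rightarrow> nat \<Rightarrow> nat \<Rightarrow> nat" where
  "tau' N r a = card {f \<in> {..<r} \<rightarrow>\<^sub>E {1..min a N}. (\<Prod>i<r. f i) = a}"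

end

theory Submission
  imports Defs
begin

text \<open>
  The left-hand side counts pairs \<open>(f, g)\<close> of \<open>r\<close>-tuples with entries in \<open>{1..N}\<close> and equal
  products. Any two factorizations of the same number have a common refinement: an
  \<open>r \<times> r\<close> matrix of positive integers whose row products are the \<open>f i\<close> and whose column
  products are the \<open>g j\<close>. Each row is then a factorization of some \<open>f i \<le> N\<close>, i.e. one of the
  \<open>\<Sum>a\<le>N. \<tau>\<^sub>r(a)\<close> tuples with product at most \<open>N\<close>, and the pair \<open>(f, g)\<close> is recovered from
  the matrix. Hence the pairs are at most as many as the \<open>r\<close>-tuples of such rows.
\<close>

lemma dvd_prod_lessThan_split:
  fixes y :: "nat \<Rightarrow> nat"
  assumes "c dvd (\<Prod>j<n. y j)"
  shows "\<exists>w. (\<forall>j<n. w j dvd y j) \<and> (\<Prod>j<n. w j) = c"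
  using assms
proof (induction n arbitrary: c)
  case 0
  then show ?case by auto
next
  case (Suc n)
  then have "c dvd (\<Prod>j<n. y j) * y n" by simp
  then obtain b c' where bc: "c = b * c'" "b dvd (\<Prod>j<n. y j)" "c' dvd y n"
    using division_decomp by blast
  obtain w where w: "\<forall>j<n. w j dvd y j" "(\<Prod>j<n. w j) = b"
    using Suc.IH[OF bc(2)] by blast
  have "(\<Prod>j<Suc n. (w(n := c')) j) = c"
    using w(2) bc(1) by (simp add: prod.cong[OF refl, of _ "w(n := c')" w])
  moreover have "\<forall>j<Suc n. (w(n := c')) j dvd y j"
    using w(1) bc(3) by (auto simp: less_Suc_eq)
  ultimately show ?case by blast
qed

lemma common_refinement_of_factorizations:
  fixes x y :: "nat \<Rightarrow> nat"
  assumes "\<forall>j<n. y j > 0" and "(\<Prod>i<m. x i) = (\<Prod>j<n. y j)"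
  shows "\<exists>z. (\<forall>i<m. (\<Prod>j<n. z i j) = x i) \<and> (\<forall>j<n. (\<Prod>i<m. z i j) = y j)"
  using assms
proof (induction m arbitrary: y)
  case 0
  then have "(\<Prod>j<n. y j) = 1" by simp
  then have "\<forall>j<n. y j = 1" by (subst (asm) prod_eq_1_iff) auto
  then show ?case by (intro exI[of _ "\<lambda>_ _. 1"]) auto
next
  case (Suc m)
  have eq: "(\<Prod>i<m. x i) * x m = (\<Prod>j<n. y j)"
    using Suc.prems(2) by simp
  have "x m > 0"
    using eq Suc.prems(1) by (metis gr0I mult_0_right prod_pos lessThan_iff)
  obtain w where w: "\<forall>j<n. w j dvd y j" "(\<Prod>j<n. w j) = x m"
    using dvd_prod_lessThan_split[where c="x m" and n=n and y=y] eq by (metis dvd_triv_right)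
  define u where "u j = y j div w j" for j
  have uw: "\<forall>j<n. u j * w j = y j"
    using w(1) by (simp add: u_def)
  have "(\<Prod>j<n. u j) * x m = (\<Prod>j<n. u j * w j)"
    using w(2) by (simp add: prod.distrib)
  also have "\<dots> = (\<Prod>j<n. y j)"
    using uw by (intro prod.cong) auto
  finally have "(\<Prod>j<n. u j) * x m = (\<Prod>j<n. y j)" .
  then have "(\<Prod>j<n. u j) = (\<Prod>i<m. x i)"
    using eq \<open>x m > 0\<close> by (metis mult_right_cancel not_gr0)
  moreover have "\<forall>j<n. u j > 0"
    using uw Suc.prems(1) by (metis gr0I mult_0)
  ultimately obtain z where z: "\<forall>i<m. (\<Prod>j<n. z i j) = x i" "\<forall>j<n. (\<Prod>i<m. z i j) = u j"
    using Suc.IH by metis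
  define z' where "z' i j = (if i = m then w j else z i j)" for i j
  have "\<forall>i<Suc m. (\<Prod>j<n. z' i j) = x i"
    using z(1) w(2) by (auto simp: z'_def less_Suc_eq)
  moreover have "\<forall>j<n. (\<Prod>i<Suc m. z' i j) = y j"
    using z(2) uw by (simp add: z'_def)
  ultimately show ?case by blast
qed

lemma factor_le_prod_nat:
  fixes f :: "'a \<Rightarrow> nat"
  assumes "finite I" "\<forall>i\<in>I. f i > 0" "k \<in> I"
  shows "f k \<le> (\<Prod>i\<in>I. f i)"
  using assms by (intro dvd_imp_le dvd_prodI prod_pos) auto

lemma prod_in_bounds:
  fixes f :: "nat \<Rightarrow> nat"
  assumes "f \<in> {..<r} \<rightarrow>\<^sub>E {1..N}"
  shows "(\<Prod>i<r. f i) \<in> {1..N ^ r}"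
proof -
  have "(\<Prod>i<r. f i) \<le> (\<Prod>i<r. N)"
    using assms by (intro prod_mono) (auto simp: PiE_iff)
  moreover have "1 \<le> (\<Prod>i<r. f i)"
    using assms by (intro prod_ge_1) (auto simp: PiE_iff)
  ultimately show ?thesis by simp
qed

lemma tau'_eq_card:
  "tau' N r a = card {f \<in> {..<r} \<rightarrow>\<^sub>E {1..N}. (\<Prod>i<r. f i) = a}"
proof -
  have "f i \<le> a" if "f \<in> {..<r} \<rightarrow>\<^sub>E {1..N}" "(\<Prod>i<r. f i) = a" "i < r" for f i
    using that factor_le_prod_nat[of "{..<r}" f i] by (force simp: PiE_iff)
  then have "{f \<in> {..<r} \<rightarrow>\<^sub>E {1..min a N}. (\<Prod>i<r. f i) = a}
           = {f \<in> {..<r} \<rightarrow>\<^sub>E {1..N}. (\<Prod>i<r. f i) = a}"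
    by (auto simp: PiE_iff)
  then show ?thesis by (simp add: tau'_def)
qed

lemma sum_tau'_squared_eq_card:
  "(\<Sum>a\<in>{1..N^r}. (tau' N r a)^2) =
   card {(f, g). f \<in> {..<r} \<rightarrow>\<^sub>E {1..N} \<and> g \<in> {..<r} \<rightarrow>\<^sub>E {1..N} \<and>
                 (\<Prod>i<r. f i) = (\<Prod>i<r. g i)}"
  (is "_ = card ?P")
proof -
  define A where "A a = {f \<in> {..<r} \<rightarrow>\<^sub>E {1..N}. (\<Prod>i<r. f i) = a}" for a
  have "?P = (\<Union>a\<in>{1..N^r}. A a \<times> A a)"
    using prod_in_bounds by (auto simp: A_def)
  then have "card ?P = (\<Sum>a\<in>{1..N^r}. card (A a \<times> A a))"
    by (simp only:) (rule card_UN_disjoint[where A="\<lambda>a. A a \<times> A a"], auto simp: A_def finite_PiE)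
  then show ?thesis
    by (simp add: tau'_eq_card A_def card_cartesian_product power2_eq_square)
qed

lemma sum_tau_eq_card:
  "(\<Sum>a\<in>{1..N}. tau r a) = card {f \<in> {..<r} \<rightarrow>\<^sub>E {1..N}. (\<Prod>i<r. f i) \<le> N}"
  (is "_ = card ?T")
proof -
  define B where "B a = {f \<in> {..<r} \<rightarrow>\<^sub>E {1..a}. (\<Prod>i<r. f i) = a}" for a :: nat
  have "?T = (\<Union>a\<in>{1..N}. B a)"
  proof (intro set_eqI iffI)
    fix f assume f: "f \<in> ?T"
    then have "f i \<le> (\<Prod>i<r. f i)" if "i < r" for i
      using that factor_le_prod_nat[of "{..<r}" f i] by (force simp: PiE_iff)
    moreover have "1 \<le> (\<Prod>i<r. f i)"
      using f by (intro prod_ge_1) (auto simp: PiE_iff)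
    ultimately have "f \<in> B (\<Prod>i<r. f i)" "(\<Prod>i<r. f i) \<in> {1..N}"
      using f by (auto simp: B_def PiE_iff)
    then show "f \<in> (\<Union>a\<in>{1..N}. B a)" by blast
  next
    fix f assume "f \<in> (\<Union>a\<in>{1..N}. B a)"
    then show "f \<in> ?T" by (force simp: B_def PiE_iff)
  qed
  moreover have "finite (B a)" for a
    unfolding B_def by (rule finite_subset[of _ "{..<r} \<rightarrow>\<^sub>E {1..a}"]) (auto intro!: finite_PiE)
  ultimately have "card ?T = (\<Sum>a\<in>{1..N}. card (B a))"
    by (simp only:) (rule card_UN_disjoint[where A=B], auto simp: B_def)
  then show ?thesis
    by (simp add: B_def tau_def)
qed

lemma factor_in_range_if_prod_in_range:
  fixes h :: "nat \<Rightarrow> nat"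
  assumes "(\<Prod>j<r. h j) \<in> {1..N}" and "j < r"
  shows "h j \<in> {1..N}"
proof -
  have "(\<Prod>j<r. h j) \<noteq> 0"
    using assms(1) by (metis atLeastAtMost_iff not_one_le_zero)
  then have "\<forall>j<r. h j > 0"
    by (metis prod_zero_iff finite_lessThan lessThan_iff gr0I)
  then show ?thesis
    using factor_le_prod_nat[of "{..<r}" h j] assms by auto
qed

lemma equal_product_pair_from_matrix:
  fixes f g :: "nat \<Rightarrow> nat"
  assumes f: "f \<in> {..<r} \<rightarrow>\<^sub>E {1..N}" and g: "g \<in> {..<r} \<rightarrow>\<^sub>E {1..N}"
    and eq: "(\<Prod>i<r. f i) = (\<Prod>i<r. g i)"
  shows "\<exists>z \<in> {..<r} \<rightarrow>\<^sub>E {h \<in> {..<r} \<rightarrow>\<^sub>E {1..N}. (\<Prod>j<r. h j) \<le> N}.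
           (\<lambda>i\<in>{..<r}. \<Prod>j<r. z i j) = f \<and> (\<lambda>j\<in>{..<r}. \<Prod>i<r. z i j) = g"
    (is "\<exists>z \<in> {..<r} \<rightarrow>\<^sub>E ?T. _")
proof -
  have "\<forall>j<r. g j > 0"
    using g by (auto simp: PiE_iff Suc_le_eq)
  then obtain z where rows: "\<forall>i<r. (\<Prod>j<r. z i j) = f i"
    and cols: "\<forall>j<r. (\<Prod>i<r. z i j) = g j"
    using common_refinement_of_factorizations eq by blast
  define z' where "z' = (\<lambda>i\<in>{..<r}. \<lambda>j\<in>{..<r}. z i j)"
  have z'_eq: "z' i j = z i j" if "i < r" "j < r" for i j
    using that by (simp add: z'_def)
  have row: "(\<lambda>j\<in>{..<r}. z i j) \<in> ?T" if "i < r" for i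
  proof -
    have "f i \<in> {1..N}"
      using f that by blast
    then have prod_row: "(\<Prod>j<r. z i j) \<in> {1..N}"
      using rows that by simp
    then have "(\<lambda>j\<in>{..<r}. z i j) \<in> {..<r} \<rightarrow>\<^sub>E {1..N}"
      using factor_in_range_if_prod_in_range[of "z i" r N] by (simp add: restrict_PiE_iff)
    moreover have "(\<Prod>j<r. (\<lambda>j\<in>{..<r}. z i j) j) = (\<Prod>j<r. z i j)"
      by (rule prod.cong) auto
    ultimately show ?thesis
      using prod_row by simp
  qed
  have "(\<Prod>j<r. z' i j) = f i" if "i < r" for i
  proof -
    have "(\<Prod>j<r. z' i j) = (\<Prod>j<r. z i j)"
      using that by (intro prod.cong) (auto simp: z'_eq)
    then show ?thesis
      using rows that by simp
  qed
  then have row_prods: "(\<lambda>i\<in>{..<r}. \<Prod>j<r. z' i j) = f"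
    by (intro ext) (simp add: PiE_arb[OF f])
  have "(\<Prod>i<r. z' i j) = g j" if "j < r" for j
  proof -
    have "(\<Prod>i<r. z' i j) = (\<Prod>i<r. z i j)"
      using that by (intro prod.cong) (auto simp: z'_eq)
    then show ?thesis
      using cols that by simp
  qed
  then have col_prods: "(\<lambda>j\<in>{..<r}. \<Prod>i<r. z' i j) = g"
    by (intro ext) (simp add: PiE_arb[OF g])
  have "z' \<in> {..<r} \<rightarrow>\<^sub>E ?T"
    unfolding z'_def restrict_PiE_iff using row by blast
  then show ?thesis
    using row_prods col_prods by (intro bexI[where x = z'] conjI)
qed

lemma card_equal_product_pairs_le:
  fixes r N :: nat
  shows "card {(f, g). f \<in> {..<r} \<rightarrow>\<^sub>E {1..N} \<and> g \<in> {..<r} \<rightarrow>\<^sub>E {1..N} \<and>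
                 (\<Prod>i<r. f i) = (\<Prod>i<r. g i)}
   \<le> card {f \<in> {..<r} \<rightarrow>\<^sub>E {1..N}. (\<Prod>i<r. f i) \<le> N} ^ r"
  (is "card ?P \<le> card ?T ^ r")
proof -
  define row_col_prods where "row_col_prods z =
    ((\<lambda>i\<in>{..<r}. \<Prod>j<r. z i j), (\<lambda>j\<in>{..<r}. \<Prod>i<r. z i j))" for z :: "nat \<Rightarrow> nat \<Rightarrow> nat"
  have "?P \<subseteq> row_col_prods ` ({..<r} \<rightarrow>\<^sub>E ?T)"
  proof safe
    fix f g assume "f \<in> {..<r} \<rightarrow>\<^sub>E {1..N}" "g \<in> {..<r} \<rightarrow>\<^sub>E {1..N}"
      "(\<Prod>i<r. f i) = (\<Prod>i<r. g i)"
    from equal_product_pair_from_matrix[OF this] obtain z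
      where z: "z \<in> {..<r} \<rightarrow>\<^sub>E ?T"
        and prods: "(\<lambda>i\<in>{..<r}. \<Prod>j<r. z i j) = f \<and> (\<lambda>j\<in>{..<r}. \<Prod>i<r. z i j) = g" ..
    have "(f, g) = row_col_prods z"
      using prods by (simp add: row_col_prods_def)
    with z show "(f, g) \<in> row_col_prods ` ({..<r} \<rightarrow>\<^sub>E ?T)"
      by (rule rev_image_eqI[where f = row_col_prods])
  qed
  moreover have "finite ({..<r} \<rightarrow>\<^sub>E ?T)"
  proof -
    have "finite ?T"
      by (rule finite_subset[of _ "{..<r} \<rightarrow>\<^sub>E {1..N}"]) (auto intro: finite_PiE)
    then show ?thesis
      by (intro finite_PiE) simp_all
  qed
  ultimately have "card ?P \<le> card (row_col_prods ` ({..<r} \<rightarrow>\<^sub>E ?T))"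
    by (intro card_mono finite_imageI)
  also have "\<dots> \<le> card ({..<r} \<rightarrow>\<^sub>E ?T)"
    by (rule card_image_le) fact
  finally show ?thesis
    by (simp add: card_PiE)
qed

theorem lemma2p2:
  fixes r N :: nat
  assumes "r \<ge> 1" and "N \<ge> 1"
  shows "(\<Sum>a\<in>{1..N^r}. (tau' N r a)^2) \<le> (\<Sum>a\<in>{1..N}. tau r a)^r"
  unfolding sum_tau'_squared_eq_card sum_tau_eq_card
  by (rule card_equal_product_pairs_le)

end
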